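(* For any graph $F$ on $y\ge 1$ vertices and any real $\lambda>0$, \[ \frac{\lambda Z_F'(\lambda)}{Z_F(\lambda)}\ \ge\ \frac{\log Z_F(\lambda)}{K\bigl(y\lambda/\log Z_F(\lambda)\bigr)}. \]
   Context: $\log$ is the natural logarithm. For a graph $F$, $Z_F(\lambda)=\sum_{I}\lambda^{|I|}$ where the sum is over all independent sets $I$ of $F$ (including $\varnothing$), and $Z_F'$ is its derivative in $\lambda$. $W_{-1}$ denotes the lower (negative real) branch of the Lambert $W$-function, i.e. the inverse of $x\mapsto xe^x$ on $(-\infty,-1]$, defined on $[-1/e,0)$. $K:[1,\infty)\to[1,\infty)$ is $K(y)=-W_{-1}(-1/(ey))$; equivalently, for $y\ge1$, $x=1/(eyK(y))$ is the solution in $(0,1/e]$ of $x\log(1/x)=1/(ey)$. (Note $y\lambda/\log Z_F(\lambda)\ge1$ since $Z_F(\lambda)\le(1+\lambda)^y$.) *)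

theory Defs
  imports "HOL-Analysis.Analysis"
begin

definition is_graph :: "'a set \<Rightarrow> ('a \<Rightarrow> 'a \<Rightarrow> bool) \<Rightarrow> bool" where
  "is_graph V E \<longleftrightarrow> finite V \<and> (\<forall>u v. E u v \<longrightarrow> E v u) \<and> (\<forall>v. \<not> E v v)"

definition indep_set :: "'a set \<Rightarrow> ('a \<Rightarrow> 'a \<Rightarrow> bool) \<Rightarrow> 'a set \<Rightarrow> bool" where
  "indep_set V E I \<longleftrightarrow> I \<subseteq> V \<and> (\<forall>u\<in>I. \<forall>v\<in>I. \<not> E u v)"

definition indep_poly :: "'a set \<Rightarrow> ('a \<Rightarrow> 'a \<Rightarrow> bool) \<Rightarrow> real \<Rightarrow> real" where
  "indep_poly V E lam = (\<Sum>I\<in>{I. indep_set V E I}. lam ^ card I)"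

text \<open>Lower branch W_{-1} of Lambert W: inverse of x e^x on (-inf,-1], on [-1/e,0).\<close>
definition lambertW_m1 :: "real \<Rightarrow> real" where
  "lambertW_m1 z = (THE w. w \<le> -1 \<and> w * exp w = z)"

definition K_fun :: "real \<Rightarrow> real" where
  "K_fun y = - lambertW_m1 (- 1 / (exp 1 * y))"

end

theory Submission
  imports Defs
begin

text \<open>Let \<open>\<mu>(I) = \<lambda>^|I| / Z_F(\<lambda>)\<close> be the hard-core measure on independent sets. Its relative
  entropy with respect to the product measure \<open>\<nu>(I) = c^|I| / (1 + c)^y\<close> is nonnegative (\<open>\<nu>\<close> has
  total mass at most one on independent sets), which for every \<open>c > 0\<close> gives
  \<open>log Z \<le> (\<lambda>Z'/Z) log(\<lambda>/c) + y log(1 + c)\<close>. Using \<open>log(1 + c) \<le> c\<close> and choosing \<open>c\<close> so that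
  \<open>log(\<lambda>/c) = K - 1\<close>, which is exactly the defining equation of \<open>K = K(y\<lambda>/log Z)\<close>, the bound
  rearranges to \<open>log Z / K \<le> \<lambda>Z'/Z\<close>.\<close>

lemma sum_power_card_Pow:
  fixes c :: "'b::comm_semiring_1"
  assumes "finite V"
  shows "(\<Sum>X\<in>Pow V. c ^ card X) = (1 + c) ^ card V"
  using prod_add[OF assms, of "\<lambda>_. c" "\<lambda>_. 1"] by (simp add: add.commute)

lemma gibbs_inequality:
  fixes p q :: "'b \<Rightarrow> real"
  assumes p: "\<And>a. a \<in> A \<Longrightarrow> p a > 0" and q: "\<And>a. a \<in> A \<Longrightarrow> q a > 0"
    and mass: "sum q A \<le> sum p A"
  shows "(\<Sum>a\<in>A. p a * ln (p a / q a)) \<ge> 0"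
proof -
  have "p a - q a \<le> p a * ln (p a / q a)" if "a \<in> A" for a
  proof -
    have pa: "p a > 0" and qa: "q a > 0"
      using p q that by auto
    have "- ln (p a / q a) = ln (q a / p a)"
      using pa qa by (simp add: ln_div)
    also have "\<dots> \<le> q a / p a - 1"
      using pa qa by (intro ln_le_minus_one) simp
    finally have "p a * (1 - q a / p a) \<le> p a * ln (p a / q a)"
      using pa by (intro mult_left_mono) simp_all
    then show ?thesis
      using pa by (simp add: right_diff_distrib)
  qed
  then have "(\<Sum>a\<in>A. p a - q a) \<le> (\<Sum>a\<in>A. p a * ln (p a / q a))"
    by (rule sum_mono)
  with mass show ?thesis
    by (simp add: sum_subtractf)
qed

lemma indep_sets_subset_Pow: "{I. indep_set V E I} \<subseteq> Pow V"
  by (auto simp: indep_set_def)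

lemma finite_indep_sets: "finite V \<Longrightarrow> finite {I. indep_set V E I}"
  by (rule finite_subset[OF indep_sets_subset_Pow]) simp

lemma indep_poly_le_power:
  assumes "finite V" and "c \<ge> 0"
  shows "indep_poly V E c \<le> (1 + c) ^ card V"
proof -
  have "indep_poly V E c \<le> (\<Sum>X\<in>Pow V. c ^ card X)"
    unfolding indep_poly_def using assms indep_sets_subset_Pow
    by (intro sum_mono2) auto
  then show ?thesis
    using sum_power_card_Pow[OF assms(1), of c] by simp
qed

lemma indep_poly_ge_one_plus:
  assumes "is_graph V E" and "v \<in> V" and "lam \<ge> 0"
  shows "1 + lam \<le> indep_poly V E lam"
proof -
  have "{{}, {v}} \<subseteq> {I. indep_set V E I}"
    using assms unfolding indep_set_def is_graph_def by auto
  moreover have "finite {I. indep_set V E I}"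
    using assms(1) finite_indep_sets unfolding is_graph_def by blast
  ultimately have "(\<Sum>I\<in>{{}, {v}}. lam ^ card I) \<le> indep_poly V E lam"
    unfolding indep_poly_def using assms(3) by (intro sum_mono2) auto
  then show ?thesis
    by simp
qed

lemma indep_poly_ge_one:
  assumes "finite V" and "lam \<ge> 0"
  shows "1 \<le> indep_poly V E lam"
proof -
  have "{} \<in> {I. indep_set V E I}"
    by (simp add: indep_set_def)
  from member_le_sum[OF this, where f = "\<lambda>I. lam ^ card I"] show ?thesis
    using finite_indep_sets[OF assms(1)] assms(2) by (simp add: indep_poly_def)
qed

lemma mult_deriv_indep_poly:
  assumes "finite V"
  shows "lam * deriv (indep_poly V E) lam = (\<Sum>I | indep_set V E I. real (card I) * lam ^ card I)"
proof -
  have "(indep_poly V E has_real_derivative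
          (\<Sum>I | indep_set V E I. real (card I) * lam ^ (card I - 1))) (at lam)"
    unfolding indep_poly_def[abs_def] by (intro DERIV_sum) (metis DERIV_pow One_nat_def)
  then have "lam * deriv (indep_poly V E) lam
               = (\<Sum>I | indep_set V E I. lam * (real (card I) * lam ^ (card I - 1)))"
    by (simp add: DERIV_imp_deriv sum_distrib_left)
  also have "\<dots> = (\<Sum>I | indep_set V E I. real (card I) * lam ^ card I)"
  proof (intro sum.cong refl)
    fix I :: "'a set"
    show "lam * (real (card I) * lam ^ (card I - 1)) = real (card I) * lam ^ card I"
      by (cases "card I") simp_all
  qed
  finally show ?thesis .
qed

lemma ln_indep_poly_le:
  assumes "finite V" and "lam > 0" and "c > 0"
  shows "ln (indep_poly V E lam)
           \<le> lam * deriv (indep_poly V E) lam / indep_poly V E lam * ln (lam / c)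
             + card V * ln (1 + c)"
proof -
  define S where "S = {I. indep_set V E I}"
  define Z where "Z = indep_poly V E lam"
  define P where "P = (1 + c :: real) ^ card V"
  define M where "M = lam * deriv (indep_poly V E) lam"
  have M: "M = (\<Sum>I\<in>S. real (card I) * lam ^ card I)"
    using mult_deriv_indep_poly[OF assms(1), of lam E] by (simp add: M_def S_def)
  have Z: "Z > 0" and P: "P > 0"
    using indep_poly_ge_one[OF assms(1), of lam E] assms by (simp_all add: Z_def P_def)
  have "(\<Sum>I\<in>S. c ^ card I * Z / P) = indep_poly V E c * Z / P"
    by (simp add: S_def indep_poly_def sum_divide_distrib sum_distrib_right)
  also have "\<dots> \<le> P * Z / P"
    using indep_poly_le_power[OF assms(1), of c E] assms(3) Z P
    by (intro divide_right_mono mult_right_mono) (simp_all add: P_def)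
  also have "\<dots> = (\<Sum>I\<in>S. lam ^ card I)"
    using P by (simp add: Z_def S_def indep_poly_def)
  finally have mass: "(\<Sum>I\<in>S. c ^ card I * Z / P) \<le> (\<Sum>I\<in>S. lam ^ card I)" .
  have "0 \<le> (\<Sum>I\<in>S. lam ^ card I * ln (lam ^ card I / (c ^ card I * Z / P)))"
    by (rule gibbs_inequality[where A = S and p = "\<lambda>I. lam ^ card I" and q = "\<lambda>I. c ^ card I * Z / P"])
      (use assms Z P mass in \<open>simp_all add: S_def\<close>)
  also have "\<dots> = (\<Sum>I\<in>S. real (card I) * lam ^ card I * ln (lam / c) + lam ^ card I * (ln P - ln Z))"
  proof (intro sum.cong refl)
    fix I
    have "ln (lam ^ card I / (c ^ card I * Z / P)) = ln ((lam / c) ^ card I * (P / Z))"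
      by (simp add: power_divide)
    also have "\<dots> = card I * ln (lam / c) + (ln P - ln Z)"
      using assms Z P by (simp add: ln_mult ln_realpow ln_div)
    finally have "ln (lam ^ card I / (c ^ card I * Z / P)) = card I * ln (lam / c) + (ln P - ln Z)" .
    then show "lam ^ card I * ln (lam ^ card I / (c ^ card I * Z / P))
        = real (card I) * lam ^ card I * ln (lam / c) + lam ^ card I * (ln P - ln Z)"
      by (simp only:) (simp add: algebra_simps)
  qed
  also have "\<dots> = M * ln (lam / c) + Z * (ln P - ln Z)"
    unfolding M Z_def indep_poly_def S_def sum.distrib sum_distrib_right ..
  also have "\<dots> = Z * (M / Z * ln (lam / c) + ln P - ln Z)"
    using Z by (simp add: field_simps)
  finally have "ln Z \<le> M / Z * ln (lam / c) + ln P"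
    using Z by (simp add: zero_le_mult_iff)
  moreover have "ln P = card V * ln (1 + c)"
    using assms(3) by (simp add: P_def ln_realpow)
  ultimately show ?thesis
    unfolding Z_def M_def by simp
qed

lemma mult_exp_strict_antimono:
  fixes a b :: real
  assumes "a < b" and "b \<le> -1"
  shows "b * exp b < a * exp a"
proof (rule DERIV_neg_imp_decreasing_open[OF assms(1)])
  fix x :: real
  assume "a < x" "x < b"
  then have "(1 + x) * exp x < 0"
    using assms(2) by (simp add: mult_neg_pos)
  moreover have "((\<lambda>x. x * exp x) has_real_derivative (1 + x) * exp x) (at x)"
    by (auto intro!: derivative_eq_intros simp: algebra_simps)
  ultimately show "\<exists>y. ((\<lambda>x. x * exp x) has_real_derivative y) (at x) \<and> y < 0"
    by blast
qed (intro continuous_intros)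

lemma lambertW_m1_spec:
  assumes "- 1 / exp 1 \<le> z" and "z < 0"
  shows "lambertW_m1 z \<le> -1" and "lambertW_m1 z * exp (lambertW_m1 z) = z"
proof -
  \<comment> \<open>\<open>t e\<^sup>-\<^sup>t \<le> 2 / t\<close> by the quadratic Taylor bound, so \<open>-t\<close> lies left of the root\<close>
  define t where "t = 2 / - z"
  have t1: "1 \<le> t"
  proof -
    have "- z \<le> 1 / exp 1" using assms(1) by simp
    also have "\<dots> \<le> 2" using exp_ge_add_one_self[of 1] by (simp add: divide_le_eq)
    finally show ?thesis using assms(2) by (simp add: t_def divide_le_eq)
  qed
  have "t * exp (- t) \<le> - z"
  proof -
    have "t\<^sup>2 / 2 \<le> exp t"
      using exp_lower_Taylor_quadratic[of t] t1 by simp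
    then have "t * exp (- t) \<le> t / (t\<^sup>2 / 2)"
      using t1 by (simp add: exp_minus divide_simps)
    also have "\<dots> = - z"
      using t1 assms(2) by (simp add: t_def power2_eq_square field_simps)
    finally show ?thesis .
  qed
  then have "(- t) * exp (- t) \<ge> z" by simp
  moreover have "(- 1) * exp (- 1) \<le> z"
    using assms(1) by (simp add: exp_minus divide_simps)
  ultimately obtain w where w: "- t \<le> w" "w \<le> -1" "w * exp w = z"
    using IVT2[of "\<lambda>x. x * exp x" "-1" z "-t"] t1 by (auto intro: continuous_intros)
  have "\<exists>!w. w \<le> -1 \<and> w * exp w = z"
  proof (rule ex1I[of _ w])
    fix v assume v: "v \<le> -1 \<and> v * exp v = z"
    show "v = w"
      using mult_exp_strict_antimono[of v w] mult_exp_strict_antimono[of w v] v w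
      by (cases v w rule: linorder_cases) auto
  qed (use w in auto)
  then have "lambertW_m1 z \<le> -1 \<and> lambertW_m1 z * exp (lambertW_m1 z) = z"
    unfolding lambertW_m1_def by (rule theI')
  then show "lambertW_m1 z \<le> -1" and "lambertW_m1 z * exp (lambertW_m1 z) = z"
    by simp_all
qed

lemma K_fun_spec:
  assumes "Y \<ge> 1"
  shows "K_fun Y \<ge> 1" and "K_fun Y * Y = exp (K_fun Y - 1)"
proof -
  have z: "- 1 / exp 1 \<le> - 1 / (exp 1 * Y)" "- 1 / (exp 1 * Y) < 0"
    using assms by (simp_all add: divide_simps)
  show "K_fun Y \<ge> 1"
    using lambertW_m1_spec(1)[OF z] by (simp add: K_fun_def)
  have "K_fun Y * exp (- K_fun Y) = 1 / (exp 1 * Y)"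
    using lambertW_m1_spec(2)[OF z] by (simp add: K_fun_def)
  then show "K_fun Y * Y = exp (K_fun Y - 1)"
    using assms by (simp add: exp_diff exp_minus field_simps)
qed

lemma K_fun_gt_one:
  assumes "Y > 1"
  shows "K_fun Y > 1"
proof -
  have "K_fun Y \<noteq> 1"
    using K_fun_spec(2)[of Y] assms by auto
  then show ?thesis
    using K_fun_spec(1)[of Y] assms by simp
qed

lemma div_K_fun_le_of_entropy_bound:
  fixes L R y lam :: real
  assumes "L > 0" and "lam > 0" and "L < y * lam"
    and bound: "\<And>c. c > 0 \<Longrightarrow> L \<le> R * ln (lam / c) + y * ln (1 + c)"
  shows "L / K_fun (y * lam / L) \<le> R"
proof -
  have y: "y > 0"
    using assms(1-3) by (smt (verit) mult_nonpos_nonneg)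
  define Y where "Y = y * lam / L"
  define K where "K = K_fun Y"
  have Y: "Y > 1" using assms by (simp add: Y_def field_simps)
  have K: "K > 1" and KY: "K * Y = exp (K - 1)"
    using K_fun_gt_one[OF Y] K_fun_spec(2)[of Y] Y by (simp_all add: K_def)
  \<comment> \<open>the Lambert equation for \<open>K\<close> makes \<open>ln (lam / c) = K - 1\<close> and \<open>y c = L / K\<close>\<close>
  define c where "c = lam / (K * Y)"
  have c: "c > 0" using assms K Y by (simp add: c_def)
  have "ln (lam / c) = K - 1"
    using assms K Y KY by (simp add: c_def)
  moreover have "y * ln (1 + c) \<le> L / K"
  proof -
    have "y * ln (1 + c) \<le> y * c"
      using y c by (intro mult_left_mono ln_add_one_self_le_self) simp_all
    also have "y * c = L / K"
      using assms y K by (simp add: c_def Y_def field_simps)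
    finally show ?thesis .
  qed
  ultimately have "L \<le> R * (K - 1) + L / K"
    using bound[OF c] by simp
  then have "(K - 1) * (L / K) \<le> (K - 1) * R"
    using K by (simp add: field_simps)
  then have "L / K \<le> R"
    by (rule mult_left_le_imp_le) (use K in simp)
  then show ?thesis
    by (simp add: K_def Y_def)
qed

theorem mainTheorem4:
  fixes V :: "'a set" and E :: "'a \<Rightarrow> 'a \<Rightarrow> bool" and lam :: real
  assumes "is_graph V E" and "card V \<ge> 1" and "lam > 0"
  shows "lam * deriv (indep_poly V E) lam / indep_poly V E lam
           \<ge> ln (indep_poly V E lam)
             / K_fun (real (card V) * lam / ln (indep_poly V E lam))"
proof -
  have V: "finite V" "V \<noteq> {}"
    using assms(1,2) by (auto simp: is_graph_def)
  then obtain v where "v \<in> V"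
    by blast
  define Z where "Z = indep_poly V E lam"
  have "1 + lam \<le> Z"
    unfolding Z_def using indep_poly_ge_one_plus[OF assms(1) \<open>v \<in> V\<close>] assms(3) by simp
  then have "ln Z > 0"
    using assms(3) by simp
  have "ln Z \<le> ln ((1 + lam) ^ card V)"
    using indep_poly_le_power[OF V(1), of lam E] assms(3) \<open>1 + lam \<le> Z\<close> by (simp add: Z_def)
  also have "\<dots> < card V * lam"
    using ln_add_one_self_less_self[OF assms(3)] assms(2,3) by (simp add: ln_realpow)
  finally have "ln Z < card V * lam" .
  with \<open>ln Z > 0\<close> show ?thesis
    unfolding Z_def
    by (intro div_K_fun_le_of_entropy_bound assms(3) ln_indep_poly_le[OF V(1)])
qed

end
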